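(* Consider a finite Markov decision process with state set $\mathcal S$, action set $\mathcal A$, transition function $P$, reward function $R$, initial state distribution $d_0$ and discount factor $\gamma\in[0,1)$, together with a finite set of options $\mathcal O$ in which every option $o$ has an intra-option policy $\pi_o(s,a,\theta)$ (a probability distribution over $a\in\mathcal A$ for each $s$), differentiable in a parameter vector $\theta$, a termination function $\beta_o(s)\in[0,1]$, and a policy over options $\pi_{\mathcal O}(s,o)$. Let $X=(S_0,O_0,A_0,S_1,O_1,A_1,\dots)$ be the random path generated by the option dynamics described in the context, and for $\mathcal T\in\mathbb N$ let $G^{\mathcal T}_\theta$ be the $\mathcal T$-step finite horizon Fisher information matrix with respect to $\theta$, i.e. the Fisher information matrix of the distribution of the path truncated to terminate at time step $\mathcal T$: $$\big(G^{\mathcal T}_\theta\big)_{i,j}=\mathbb E\Big[\frac{\partial \ln \Pr(X_{0:\mathcal T};\theta)}{\partial\theta_i}\frac{\partial \ln \Pr(X_{0:\mathcal T};\theta)}{\partial\theta_j}\Big] .$$ Let $\mu_{\mathcal O}(s,o)$ denote the stationary distribution of state-option pairs $(s,o)$ of this process. Then $$\lim_{\mathcal T\to\infty}\frac{1}{\mathcal T}G^{\mathcal T}_\theta=\langle G_\theta\rangle_{\mu_{\mathcal O}(s,o)},\qquad\text{where}\qquad \big(\langle G_\theta\rangle_{\mu_{\mathcal O}(s,o)}\big)_{i,j}=\sum_{s,o}\mu_{\mathcal O}(s,o)\sum_{a}\pi_o(s,a,\theta)\,\frac{\partial\ln\pi_o(s,a,\theta)}{\partial\theta_i}\frac{\partial\ln\pi_o(s,a,\theta)}{\partial\theta_j},$$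 i.e. the limit equals the Fisher information matrix of the intra-option policies under the stationary distribution $\pi_o(s,a,\theta)\mu_{\mathcal O}(s,o)$ of states, options and actions.
   Context: Option dynamics (option-critic framework, all options available in every state): at time $t$ the agent is in state $S_t$ with active option $O_t$; it draws $A_t\sim\pi_{O_t}(S_t,\cdot,\theta)$, receives a reward $R_t$ with $\mathbb E[R_t\mid S_t=s,A_t=a]=R(s,a)$, and the environment moves to $S_{t+1}\sim P(S_t,A_t,\cdot)$. The next option is then drawn with probability $\Pr(O_{t+1}=o'\mid O_t=o,S_{t+1}=s')=(1-\beta_o(s'))\mathbf 1_{o'=o}+\beta_o(s')\pi_{\mathcal O}(s',o')$. The initial pair $(S_0,O_0)=(s_0,o_0)$ is given. The discounted problem is treated as an undiscounted one in which the process terminates with probability $1-\gamma$ at each step. The process of state-option pairs is assumed ergodic and irreducible, so that $\mu_{\mathcal O}(s,o)$ is a well-defined stationary distribution. *)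

theory Defs
  imports "HOL-Analysis.Analysis"
begin

definition partial :: "'p::finite \<Rightarrow> (real^'p \<Rightarrow> real) \<Rightarrow> real^'p \<Rightarrow> real" where
  "partial i f th = deriv (\<lambda>t. f (th + t *\<^sub>R axis i 1)) 0"

text \<open>Option switching probability Pr(O_{t+1}=q' | O_t=q, S_{t+1}=s').\<close>
definition opt_next :: "('q \<Rightarrow> 's \<Rightarrow> real) \<Rightarrow> ('s \<Rightarrow> 'q \<Rightarrow> real) \<Rightarrow> 'q \<Rightarrow> 's \<Rightarrow> 'q \<Rightarrow> real" where
  "opt_next \<beta> \<pi>O q s' q' = (1 - \<beta> q s') * (if q' = q then 1 else 0) + \<beta> q s' * \<pi>O s' q'"

text \<open>Probability of a path segment (S_t,O_t,A_t),...,(S_{t+k},O_{t+k},A_{t+k}) given (S_t,O_t).\<close>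
fun path_prob_aux :: "('q \<Rightarrow> 's \<Rightarrow> 'a \<Rightarrow> real^'p \<Rightarrow> real) \<Rightarrow> ('s \<Rightarrow> 'a \<Rightarrow> 's \<Rightarrow> real)
    \<Rightarrow> ('q \<Rightarrow> 's \<Rightarrow> real) \<Rightarrow> ('s \<Rightarrow> 'q \<Rightarrow> real) \<Rightarrow> real^'p \<Rightarrow> ('s \<times> 'q \<times> 'a) list \<Rightarrow> real" where
  "path_prob_aux \<pi> P \<beta> \<pi>O th [] = 1"
| "path_prob_aux \<pi> P \<beta> \<pi>O th [(s, q, a)] = \<pi> q s a th"
| "path_prob_aux \<pi> P \<beta> \<pi>O th ((s, q, a) # (s', q', a') # xs) =
     \<pi> q s a th * P s a s' * opt_next \<beta> \<pi>O q s' q' * path_prob_aux \<pi> P \<beta> \<pi>O th ((s', q', a') # xs)"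

text \<open>Probability of the truncated path X_{0:T} = ((S_0,O_0,A_0),...,(S_{T-1},O_{T-1},A_{T-1}))
  when (S_0,O_0) = (s0,q0).\<close>
definition path_prob where
  "path_prob \<pi> P \<beta> \<pi>O s0 q0 th xs =
     (case xs of [] \<Rightarrow> 1
      | (s, q, a) # _ \<Rightarrow> if s = s0 \<and> q = q0 then path_prob_aux \<pi> P \<beta> \<pi>O th xs else 0)"

definition fisher_T where
  "fisher_T \<pi> P \<beta> \<pi>O s0 q0 th T i j =
     (\<Sum>xs\<in>{xs :: ('s::finite \<times> 'q::finite \<times> 'a::finite) list. length xs = T}.
        path_prob \<pi> P \<beta> \<pi>O s0 q0 th xs
        * partial i (\<lambda>th'. ln (path_prob \<pi> P \<beta> \<pi>O s0 q0 th' xs)) th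
        * partial j (\<lambda>th'. ln (path_prob \<pi> P \<beta> \<pi>O s0 q0 th' xs)) th)"

definition so_kernel where
  "so_kernel \<pi> P \<beta> \<pi>O th = (\<lambda>(s, q) (s', q').
     (\<Sum>a\<in>(UNIV :: 'a::finite set). \<pi> q s a th * P s a s' * opt_next \<beta> \<pi>O q s' q'))"

fun kpow :: "('x::finite \<Rightarrow> 'x \<Rightarrow> real) \<Rightarrow> nat \<Rightarrow> 'x \<Rightarrow> 'x \<Rightarrow> real" where
  "kpow K 0 x y = (if x = y then 1 else 0)"
| "kpow K (Suc n) x y = (\<Sum>z\<in>UNIV. kpow K n x z * K z y)"

definition irreducible_chain :: "('x::finite \<Rightarrow> 'x \<Rightarrow> real) \<Rightarrow> bool" where
  "irreducible_chain K \<longleftrightarrow> (\<forall>x y. \<exists>n. kpow K n x y > 0)"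

definition aperiodic_chain :: "('x::finite \<Rightarrow> 'x \<Rightarrow> real) \<Rightarrow> bool" where
  "aperiodic_chain K \<longleftrightarrow> (\<forall>x. Gcd {n. n > 0 \<and> kpow K n x x > 0} = 1)"

definition stationary_dist :: "('x::finite \<Rightarrow> 'x \<Rightarrow> real) \<Rightarrow> ('x \<Rightarrow> real) \<Rightarrow> bool" where
  "stationary_dist K \<mu> \<longleftrightarrow> (\<forall>x. \<mu> x \<ge> 0) \<and> (\<Sum>x\<in>UNIV. \<mu> x) = 1 \<and>
     (\<forall>y. (\<Sum>x\<in>UNIV. \<mu> x * K x y) = \<mu> y)"

definition avg_fisher where
  "avg_fisher \<pi> \<mu> th i j =
     (\<Sum>(s, q)\<in>UNIV. \<mu> (s, q) * (\<Sum>a\<in>(UNIV :: 'a::finite set). \<pi> q s a th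
        * partial i (\<lambda>th'. ln (\<pi> q s a th')) th * partial j (\<lambda>th'. ln (\<pi> q s a th')) th))"

end

(* Neither the transitions nor the option switching depend on theta, so the score
   d/d theta ln Pr(X_0:T) of a path is the sum of the per-step scores
   d/d theta ln pi_O_t(S_t, A_t). Each per-step score has conditional mean zero given the
   past, hence all cross terms in the square of the path score vanish and
   G^T = sum_{t<T} E[f(S_t, O_t)], where f(s, o) is the Fisher information of pi_o(s, .).
   Thus G^T / T is the Cesaro average of K^t f at (s0, o0) for the state-option kernel K,
   and for an irreducible finite chain these averages converge to the stationary mean of f. *)
theory Submission
  imports Defs
begin

section \<open>Powers of a stochastic kernel\<close>

lemma kpow_nonneg:
  assumes "\<And>x y. K x y \<ge> 0"
  shows "kpow K n x y \<ge> 0"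
  by (induction n arbitrary: y) (auto intro!: sum_nonneg mult_nonneg_nonneg assms)

lemma sum_kpow_eq_1:
  assumes "\<And>x. (\<Sum>y\<in>UNIV. K x y) = 1"
  shows "(\<Sum>y\<in>UNIV. kpow K n x y) = 1"
proof (induction n)
  case 0
  then show ?case by simp
next
  case (Suc n)
  have "(\<Sum>y\<in>UNIV. kpow K (Suc n) x y) = (\<Sum>z\<in>UNIV. kpow K n x z * (\<Sum>y\<in>UNIV. K z y))"
    by (simp add: sum_distrib_left) (rule sum.swap)
  with Suc assms show ?case
    by simp
qed

lemma kpow_le_one:
  assumes "\<And>x y. K x y \<ge> 0" and "\<And>x. (\<Sum>y\<in>UNIV. K x y) = 1"
  shows "kpow K n x y \<le> 1"
proof -
  have "kpow K n x y \<le> (\<Sum>z\<in>UNIV. kpow K n x z)"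
    by (rule member_le_sum) (auto intro: kpow_nonneg assms(1))
  then show ?thesis
    by (simp add: sum_kpow_eq_1 assms(2))
qed

lemma kpow_Suc_left: "kpow K (Suc n) x y = (\<Sum>z\<in>UNIV. K x z * kpow K n z y)"
proof (induction n arbitrary: y)
  case 0
  then show ?case
    by (simp add: if_distrib[of "\<lambda>u. u * _"] if_distrib[of "\<lambda>u. _ * u"] cong: if_cong)
next
  case (Suc n)
  then show ?case
    by (simp add: sum_distrib_left sum_distrib_right mult.assoc) (rule sum.swap)
qed

lemma sum_kpow_invariant:
  assumes "\<And>y. (\<Sum>x\<in>UNIV. h x * K x y) = h y"
  shows "(\<Sum>x\<in>UNIV. h x * kpow K n x y) = h y"
proof (induction n arbitrary: y)
  case 0
  then show ?case
    by (simp add: if_distrib cong: if_cong)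
next
  case (Suc n)
  have "(\<Sum>x\<in>UNIV. h x * kpow K (Suc n) x y)
      = (\<Sum>z\<in>UNIV. (\<Sum>x\<in>UNIV. h x * kpow K n x z) * K z y)"
    by (simp add: sum_distrib_left sum_distrib_right mult.assoc) (rule sum.swap)
  with Suc assms show ?case
    by simp
qed

lemma sum_kpow_0: "(\<Sum>y\<in>UNIV. kpow K 0 x y * f y) = f x"
  by (simp add: if_distrib[of "\<lambda>u. u * _"] cong: if_cong)

lemma recurrence_eq_sum_kpow:
  assumes "\<And>x. g 0 x = 0" and "\<And>n x. g (Suc n) x = f x + (\<Sum>y\<in>UNIV. K x y * g n y)"
  shows "g n x = (\<Sum>t<n. \<Sum>y\<in>UNIV. kpow K t x y * f y)"
proof (induction n arbitrary: x)
  case 0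
  then show ?case
    by (simp add: assms(1))
next
  case (Suc n)
  have "(\<Sum>y\<in>UNIV. K x y * g n y) = (\<Sum>t<n. \<Sum>y\<in>UNIV. \<Sum>z\<in>UNIV. K x y * kpow K t y z * f z)"
    by (simp add: Suc sum_distrib_left mult.assoc) (rule sum.swap)
  also have "\<dots> = (\<Sum>t<n. \<Sum>z\<in>UNIV. kpow K (Suc t) x z * f z)"
    by (simp only: kpow_Suc_left sum_distrib_right mult.assoc) (rule sum.cong[OF refl], rule sum.swap)
  finally show ?case
    by (simp add: assms(2) sum.lessThan_Suc_shift sum_kpow_0 del: sum.lessThan_Suc kpow.simps)
qed

lemma irreducible_invariant_eq_0:
  assumes K: "\<And>x y. K x y \<ge> 0" and irred: "irreducible_chain K"
    and h_nonneg: "\<And>x. h x \<ge> 0" and h_inv: "\<And>y. (\<Sum>x\<in>UNIV. h x * K x y) = h y"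
    and "h y = 0"
  shows "h x = 0"
proof -
  obtain n where n: "kpow K n x y > 0"
    using irred unfolding irreducible_chain_def by blast
  have "h x * kpow K n x y \<le> (\<Sum>z\<in>UNIV. h z * kpow K n z y)"
    by (rule member_le_sum) (auto intro!: mult_nonneg_nonneg h_nonneg kpow_nonneg K)
  also have "\<dots> = 0"
    using sum_kpow_invariant[of h K, OF h_inv] \<open>h y = 0\<close> by simp
  finally show ?thesis
    using n h_nonneg[of x] by (simp add: mult_le_0_iff)
qed

lemma stationary_dist_pos:
  assumes K: "\<And>x y. K x y \<ge> 0" and irred: "irreducible_chain K" and \<mu>: "stationary_dist K \<mu>"
  shows "\<mu> x > 0"
proof (rule ccontr)
  assume "\<not> \<mu> x > 0"
  with \<mu> have "\<mu> x = 0"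
    unfolding stationary_dist_def by (meson antisym not_less)
  with \<mu> have "\<mu> y = 0" for y
    by (intro irreducible_invariant_eq_0[OF K irred]) (auto simp: stationary_dist_def)
  with \<mu> show False
    unfolding stationary_dist_def by simp
qed

lemma stationary_dist_unique:
  assumes K: "\<And>x y. K x y \<ge> 0" and irred: "irreducible_chain K"
    and \<mu>: "stationary_dist K \<mu>" and \<nu>: "stationary_dist K \<nu>"
  shows "\<nu> = \<mu>"
proof -
  have \<mu>_pos: "\<mu> x > 0" for x
    by (rule stationary_dist_pos[OF K irred \<mu>])
  txt \<open>With c the least ratio nu/mu, nu - c mu is a nonnegative invariant vector with a zero.\<close>
  define c where "c = Min (range (\<lambda>x. \<nu> x / \<mu> x))"
  have "c \<in> range (\<lambda>x. \<nu> x / \<mu> x)"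
    unfolding c_def by (rule Min_in) auto
  then obtain x0 where x0: "c = \<nu> x0 / \<mu> x0"
    by blast
  define h where "h x = \<nu> x - c * \<mu> x" for x
  have c_le: "c \<le> \<nu> x / \<mu> x" for x
    unfolding c_def by (rule Min_le) auto
  have "h x \<ge> 0" for x
    using c_le[of x] \<mu>_pos[of x] by (simp add: h_def pos_le_divide_eq)
  moreover have "(\<Sum>x\<in>UNIV. h x * K x y) = h y" for y
    using \<mu> \<nu> unfolding stationary_dist_def h_def
    by (simp add: left_diff_distrib sum_subtractf mult.assoc flip: sum_distrib_left)
  moreover have "h x0 = 0"
    using x0 \<mu>_pos[of x0] by (simp add: h_def)
  ultimately have "h x = 0" for x
    by (rule irreducible_invariant_eq_0[OF K irred])
  then have \<nu>_eq: "\<nu> x = c * \<mu> x" for x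
    by (simp add: h_def)
  with \<mu> \<nu> have "c = 1"
    unfolding stationary_dist_def by (simp flip: sum_distrib_left)
  with \<nu>_eq show ?thesis
    by auto
qed

lemma bounded_unique_limit_point_imp_tendsto:
  fixes X :: "nat \<Rightarrow> 'a::heine_borel"
  assumes bounded: "bounded (range X)"
    and limit_point: "\<And>r l. strict_mono r \<Longrightarrow> (X \<circ> r) \<longlonglongrightarrow> l \<Longrightarrow> l = a"
  shows "X \<longlonglongrightarrow> a"
proof (rule ccontr)
  assume "\<not> X \<longlonglongrightarrow> a"
  then obtain e where "e > 0" and "\<not> eventually (\<lambda>n. dist (X n) a < e) sequentially"
    unfolding tendsto_iff by blast
  then obtain r :: "nat \<Rightarrow> nat" where r: "strict_mono r" and far: "\<And>n. dist (X (r n)) a \<ge> e"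
    using not_eventually_sequentiallyD by (metis not_less)
  have "bounded (range (X \<circ> r))"
    using bounded by (rule bounded_subset) auto
  then obtain l r' where r': "strict_mono r'" and lim: "(X \<circ> r \<circ> r') \<longlonglongrightarrow> l"
    using bounded_imp_convergent_subsequence by blast
  have "l = a"
    using lim by (intro limit_point[of "r \<circ> r'"] strict_mono_o r r') (simp add: o_assoc)
  with lim \<open>e > 0\<close> obtain n where "dist ((X \<circ> r \<circ> r') n) a < e"
    by (metis LIMSEQ_iff_nz dist_norm le_refl)
  with far show False
    by (simp add: not_less[symmetric])
qed

lemma almost_stationary_tendsto_stationary_dist:
  fixes v :: "nat \<Rightarrow> real^'x"
  assumes K: "\<And>x y. K x y \<ge> 0" and irred: "irreducible_chain K" and \<mu>: "stationary_dist K \<mu>"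
    and v_nonneg: "\<And>n x. v n $ x \<ge> 0" and v_sum: "\<And>n. (\<Sum>x\<in>UNIV. v n $ x) = 1"
    and almost_stationary: "\<And>y. (\<lambda>n. (\<Sum>x\<in>UNIV. v n $ x * K x y) - v n $ y) \<longlonglongrightarrow> 0"
  shows "v \<longlonglongrightarrow> (\<chi> x. \<mu> x)"
proof (rule bounded_unique_limit_point_imp_tendsto)
  have "norm (v n) \<le> 1" for n
    using norm_le_l1_cart[of "v n"] v_sum[of n] v_nonneg[of n] by simp
  then show "bounded (range v)"
    unfolding bounded_iff by blast
next
  fix r l
  assume r: "strict_mono r" and lim: "(v \<circ> r) \<longlonglongrightarrow> l"
  have lim_nth: "(\<lambda>n. v (r n) $ x) \<longlonglongrightarrow> l $ x" for x
    using tendsto_vec_nth[OF lim] by (simp add: o_def)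
  have "stationary_dist K (\<lambda>x. l $ x)"
    unfolding stationary_dist_def
  proof (intro conjI allI)
    show "l $ x \<ge> 0" for x
      by (rule LIMSEQ_le_const[OF lim_nth]) (auto intro: v_nonneg)
    have "(\<lambda>n. \<Sum>x\<in>UNIV. v (r n) $ x) \<longlonglongrightarrow> (\<Sum>x\<in>UNIV. l $ x)"
      by (intro tendsto_sum lim_nth)
    then show "(\<Sum>x\<in>UNIV. l $ x) = 1"
      using v_sum by (simp add: LIMSEQ_const_iff)
    fix y
    have "(\<lambda>n. (\<Sum>x\<in>UNIV. v (r n) $ x * K x y) - v (r n) $ y)
        \<longlonglongrightarrow> (\<Sum>x\<in>UNIV. l $ x * K x y) - l $ y"
      by (intro tendsto_intros lim_nth)
    moreover have "(\<lambda>n. (\<Sum>x\<in>UNIV. v (r n) $ x * K x y) - v (r n) $ y) \<longlonglongrightarrow> 0"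
      using LIMSEQ_subseq_LIMSEQ[OF almost_stationary r] by (simp add: o_def)
    ultimately show "(\<Sum>x\<in>UNIV. l $ x * K x y) = l $ y"
      using LIMSEQ_unique by fastforce
  qed
  then have "(\<lambda>x. l $ x) = \<mu>"
    by (rule stationary_dist_unique[OF K irred \<mu>])
  then show "l = (\<chi> x. \<mu> x)"
    by (simp add: vec_eq_iff)
qed

lemma cesaro_kpow_tendsto_stationary_dist:
  assumes K: "\<And>x y. K x y \<ge> 0" and K_row: "\<And>x. (\<Sum>y\<in>UNIV. K x y) = 1"
    and irred: "irreducible_chain K" and \<mu>: "stationary_dist K \<mu>"
  shows "(\<lambda>T. (\<Sum>t<T. kpow K t x0 y) / real T) \<longlonglongrightarrow> \<mu> y"
proof -
  define v where "v n = (\<chi> y. (\<Sum>t<Suc n. kpow K t x0 y) / real (Suc n))" for n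
  have v_lim: "v \<longlonglongrightarrow> (\<chi> y. \<mu> y)"
  proof (rule almost_stationary_tendsto_stationary_dist[OF K irred \<mu>])
    show "v n $ y \<ge> 0" for n y
      unfolding v_def by (auto simp del: sum.lessThan_Suc intro!: divide_nonneg_nonneg sum_nonneg kpow_nonneg K)
    show "(\<Sum>y\<in>UNIV. v n $ y) = 1" for n
    proof -
      have "(\<Sum>y\<in>UNIV. v n $ y) = (\<Sum>t<Suc n. \<Sum>y\<in>UNIV. kpow K t x0 y) / real (Suc n)"
        unfolding v_def by (simp add: sum_divide_distrib[symmetric] del: sum.lessThan_Suc) (rule sum.swap)
      then show ?thesis
        by (simp add: sum_kpow_eq_1[OF K_row] del: sum.lessThan_Suc)
    qed
    fix y
    have telescope: "(\<Sum>x\<in>UNIV. v n $ x * K x y) - v n $ y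
        = (kpow K (Suc n) x0 y - kpow K 0 x0 y) / real (Suc n)" for n
    proof -
      have "(\<Sum>x\<in>UNIV. v n $ x * K x y) = (\<Sum>t<Suc n. kpow K (Suc t) x0 y) / real (Suc n)"
        unfolding v_def
        by (simp add: sum_divide_distrib[symmetric] sum_distrib_right del: sum.lessThan_Suc) (rule sum.swap)
      then show ?thesis
        using sum_lessThan_telescope[of "\<lambda>t. kpow K t x0 y" "Suc n"]
        by (simp add: v_def sum_subtractf diff_divide_distrib[symmetric] del: sum.lessThan_Suc)
    qed
    have kpow_unit: "0 \<le> kpow K t x0 y \<and> kpow K t x0 y \<le> 1" for t
      using kpow_nonneg[of K t x0 y] kpow_le_one[of K t x0 y] K K_row by blast
    have "norm ((\<Sum>x\<in>UNIV. v n $ x * K x y) - v n $ y) \<le> inverse (real (Suc n))" for n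
    proof -
      have diff_le: "\<bar>kpow K (Suc n) x0 y - kpow K 0 x0 y\<bar> \<le> 1"
        using kpow_unit[of "Suc n"] kpow_unit[of 0] by (simp only: abs_le_iff) linarith
      show ?thesis
        unfolding telescope real_norm_def abs_divide abs_of_nat inverse_eq_divide
        by (rule divide_right_mono[OF diff_le], rule of_nat_0_le_iff)
    qed
    then show "(\<lambda>n. (\<Sum>x\<in>UNIV. v n $ x * K x y) - v n $ y) \<longlonglongrightarrow> 0"
      by (intro Lim_null_comparison[OF always_eventually LIMSEQ_inverse_real_of_nat]) blast
  qed
  have "(\<lambda>n. (\<Sum>t<Suc n. kpow K t x0 y) / real (Suc n)) \<longlonglongrightarrow> \<mu> y"
    using tendsto_vec_nth[OF v_lim, of y] by (simp add: v_def del: sum.lessThan_Suc)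
  then show ?thesis
    by (rule LIMSEQ_imp_Suc)
qed

section \<open>Sums over paths and partial derivatives\<close>

lemma sum_lists_length_Suc:
  "(\<Sum>xs\<in>{xs::'b::finite list. length xs = Suc n}. g xs)
     = (\<Sum>y\<in>UNIV. \<Sum>ys\<in>{xs. length xs = n}. g (y # ys))"
proof -
  have "finite {xs::'b list. length xs = n}"
    using finite_lists_length_eq[of "UNIV::'b set" n] by simp
  moreover have "{xs::'b list. length xs = Suc n} = (\<lambda>(y, ys). y # ys) ` (UNIV \<times> {xs. length xs = n})"
    by (auto simp: length_Suc_conv image_iff)
  moreover have "inj_on (\<lambda>(y, ys). y # ys) (UNIV \<times> {xs::'b list. length xs = n})"
    by (auto simp: inj_on_def)
  ultimately show ?thesis
    by (simp add: sum.reindex sum.cartesian_product case_prod_unfold)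
qed

lemma sum_UNIV_supported_on_fiber:
  fixes G :: "'s::finite \<times> 'q::finite \<times> 'a::finite \<Rightarrow> 'b::comm_monoid_add"
  assumes "\<And>s' q' a. (s', q') \<noteq> (s, q) \<Longrightarrow> G (s', q', a) = 0"
  shows "(\<Sum>y\<in>UNIV. G y) = (\<Sum>a\<in>UNIV. G (s, q, a))"
proof -
  have "(\<Sum>y\<in>UNIV. G y) = (\<Sum>y\<in>(\<lambda>a. (s, q, a)) ` UNIV. G y)"
    by (intro sum.mono_neutral_right) (auto intro!: assms)
  also have "\<dots> = (\<Sum>a\<in>UNIV. G (s, q, a))"
    by (simp add: sum.reindex inj_on_def)
  finally show ?thesis .
qed

lemma has_real_derivative_partial:
  fixes f :: "real^'p \<Rightarrow> real"
  assumes "f differentiable (at th)"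
  shows "((\<lambda>t. f (th + t *\<^sub>R axis i 1)) has_real_derivative partial i f th) (at 0)"
proof -
  have "(\<lambda>t::real. th + t *\<^sub>R axis i 1) differentiable (at 0)"
    by (auto intro!: derivative_eq_intros differentiableI)
  then have "(f \<circ> (\<lambda>t::real. th + t *\<^sub>R axis i 1)) differentiable (at 0)"
    by (rule differentiable_chain_at) (simp add: assms)
  then show ?thesis
    unfolding partial_def o_def DERIV_deriv_iff_real_differentiable .
qed

lemma partial_eqI:
  "((\<lambda>t. f (th + t *\<^sub>R axis i 1)) has_real_derivative D) (at 0) \<Longrightarrow> partial i f th = D"
  unfolding partial_def by (rule DERIV_imp_deriv)

lemma partial_const: "partial i (\<lambda>_. c) th = 0"
  by (rule partial_eqI) (rule DERIV_const)

lemma partial_mult: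
  assumes "f differentiable (at th)" and "g differentiable (at th)"
  shows "partial i (\<lambda>\<theta>. f \<theta> * g \<theta>) th = partial i f th * g th + f th * partial i g th"
  using DERIV_mult[OF has_real_derivative_partial[OF assms(1)] has_real_derivative_partial[OF assms(2)]]
  by (intro partial_eqI) (simp add: mult.commute)

lemma partial_sum:
  assumes "finite A" and "\<And>a. a \<in> A \<Longrightarrow> f a differentiable (at th)"
  shows "partial i (\<lambda>\<theta>. \<Sum>a\<in>A. f a \<theta>) th = (\<Sum>a\<in>A. partial i (f a) th)"
  by (intro partial_eqI DERIV_sum has_real_derivative_partial assms)

lemma partial_ln:
  assumes "f differentiable (at th)" and "f th > 0"
  shows "partial i (\<lambda>\<theta>. ln (f \<theta>)) th = partial i f th / f th"
  using DERIV_chain2[OF DERIV_ln_divide has_real_derivative_partial[OF assms(1)]] assms(2)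
  by (intro partial_eqI) simp

lemma partial_eq_0_at_min:
  assumes "f differentiable (at th)" and "\<And>\<theta>. f \<theta> \<ge> f th"
  shows "partial i f th = 0"
  using assms by (intro DERIV_local_min[OF has_real_derivative_partial, of _ _ 1]) auto

lemma mult_partial_ln:
  assumes "f differentiable (at th)" and "\<And>\<theta>. f \<theta> \<ge> 0"
  shows "f th * partial i (\<lambda>\<theta>. ln (f \<theta>)) th = partial i f th"
proof (cases "f th = 0")
  case True
  with assms show ?thesis
    using partial_eq_0_at_min[of f th i] by simp
next
  case False
  with assms(2)[of th] have "f th > 0"
    by simp
  with assms(1) show ?thesis
    by (simp add: partial_ln)
qed

section \<open>Scores and Fisher information of the option process\<close>

locale option_model =
  fixes \<pi> :: "'q::finite \<Rightarrow> 's::finite \<Rightarrow> 'a::finite \<Rightarrow> real^'p \<Rightarrow> real"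
    and P :: "'s \<Rightarrow> 'a \<Rightarrow> 's \<Rightarrow> real"
    and \<beta> :: "'q \<Rightarrow> 's \<Rightarrow> real"
    and \<pi>O :: "'s \<Rightarrow> 'q \<Rightarrow> real"
    and th :: "real^'p"
  assumes P_nonneg: "\<And>s a s'. P s a s' \<ge> 0"
    and P_sum: "\<And>s a. (\<Sum>s'\<in>UNIV. P s a s') = 1"
    and \<pi>_nonneg: "\<And>q s a th'. \<pi> q s a th' \<ge> 0"
    and \<pi>_sum: "\<And>q s th'. (\<Sum>a\<in>UNIV. \<pi> q s a th') = 1"
    and \<pi>_diff: "\<And>q s a. (\<lambda>th'. \<pi> q s a th') differentiable (at th)"
    and \<beta>_range: "\<And>q s. 0 \<le> \<beta> q s \<and> \<beta> q s \<le> 1"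
    and \<pi>O_nonneg: "\<And>s q. \<pi>O s q \<ge> 0"
    and \<pi>O_sum: "\<And>s. (\<Sum>q\<in>UNIV. \<pi>O s q) = 1"
begin

definition policy_score :: "'p \<Rightarrow> 'q \<Rightarrow> 's \<Rightarrow> 'a \<Rightarrow> real" where
  "policy_score i q s a = partial i (\<lambda>\<theta>. ln (\<pi> q s a \<theta>)) th"

definition path_score :: "'p \<Rightarrow> ('s \<times> 'q \<times> 'a) list \<Rightarrow> real" where
  "path_score i xs = (\<Sum>(s, q, a)\<leftarrow>xs. policy_score i q s a)"

definition local_fisher :: "'p \<Rightarrow> 'p \<Rightarrow> 's \<times> 'q \<Rightarrow> real" where
  "local_fisher i j = (\<lambda>(s, q). \<Sum>a\<in>UNIV. \<pi> q s a th * policy_score i q s a * policy_score j q s a)"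

definition step_prob :: "'s \<Rightarrow> 'q \<Rightarrow> 'a \<Rightarrow> 's \<times> 'q \<Rightarrow> real" where
  "step_prob s q a = (\<lambda>(s', q'). \<pi> q s a th * P s a s' * opt_next \<beta> \<pi>O q s' q')"

definition path_expect :: "nat \<Rightarrow> 's \<times> 'q \<Rightarrow> (('s \<times> 'q \<times> 'a) list \<Rightarrow> real) \<Rightarrow> real" where
  "path_expect n x H =
     (\<Sum>xs\<in>{xs. length xs = n}. path_prob \<pi> P \<beta> \<pi>O (fst x) (snd x) th xs * H xs)"

lemma opt_next_nonneg: "opt_next \<beta> \<pi>O q s q' \<ge> 0"
  using \<beta>_range[of q s] \<pi>O_nonneg[of s q'] unfolding opt_next_def by auto

lemma sum_opt_next: "(\<Sum>q'\<in>UNIV. opt_next \<beta> \<pi>O q s q') = 1"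
  unfolding opt_next_def using \<pi>O_sum[of s]
  by (simp add: sum.distrib if_distrib[of "\<lambda>u. _ * u"] flip: sum_distrib_left cong: if_cong)

lemma path_prob_aux_nonneg: "path_prob_aux \<pi> P \<beta> \<pi>O \<theta> xs \<ge> 0"
  by (induction xs rule: induct_list012)
    (auto intro!: mult_nonneg_nonneg \<pi>_nonneg P_nonneg opt_next_nonneg)

lemma path_prob_nonneg: "path_prob \<pi> P \<beta> \<pi>O s q \<theta> xs \<ge> 0"
  by (auto simp: path_prob_def path_prob_aux_nonneg split: list.split)

lemma path_prob_aux_differentiable:
  "(\<lambda>\<theta>. path_prob_aux \<pi> P \<beta> \<pi>O \<theta> xs) differentiable (at th)"
  by (induction xs rule: induct_list012) (auto intro!: differentiable_mult \<pi>_diff)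

lemma partial_path_prob_aux:
  "partial i (\<lambda>\<theta>. path_prob_aux \<pi> P \<beta> \<pi>O \<theta> xs) th
     = path_prob_aux \<pi> P \<beta> \<pi>O th xs * path_score i xs"
proof (induction xs rule: induct_list012)
  case 1
  then show ?case
    by (simp add: partial_const path_score_def)
next
  case (2 x)
  show ?case
    using mult_partial_ln[OF \<pi>_diff \<pi>_nonneg] by (cases x) (simp add: path_score_def policy_score_def)
next
  case (3 x y xs)
  obtain s q a where x: "x = (s, q, a)"
    by (cases x)
  obtain s' q' a' where y: "y = (s', q', a')"
    by (cases y)
  have "partial i (\<pi> q s a) th = \<pi> q s a th * policy_score i q s a"
    using mult_partial_ln[OF \<pi>_diff \<pi>_nonneg] by (simp add: policy_score_def)
  with 3 show ?case
    by (simp add: x y partial_mult partial_const path_prob_aux_differentiable \<pi>_diff path_score_def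
        algebra_simps)
qed

lemma partial_ln_path_prob:
  assumes "path_prob \<pi> P \<beta> \<pi>O s q th xs > 0"
  shows "partial i (\<lambda>\<theta>. ln (path_prob \<pi> P \<beta> \<pi>O s q \<theta> xs)) th = path_score i xs"
proof (cases xs)
  case Nil
  then show ?thesis
    by (simp add: path_prob_def path_score_def partial_const)
next
  case (Cons x r)
  with assms obtain a where x: "x = (s, q, a)"
    by (cases x) (auto simp: path_prob_def split: if_splits)
  then have "path_prob \<pi> P \<beta> \<pi>O s q \<theta> xs = path_prob_aux \<pi> P \<beta> \<pi>O \<theta> xs" for \<theta>
    by (simp add: path_prob_def Cons)
  with assms show ?thesis
    by (simp add: partial_ln path_prob_aux_differentiable partial_path_prob_aux)
qed

lemma sum_policy_mult_score_eq_0: "(\<Sum>a\<in>UNIV. \<pi> q s a th * policy_score i q s a) = 0"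
proof -
  have "(\<Sum>a\<in>UNIV. \<pi> q s a th * policy_score i q s a) = (\<Sum>a\<in>UNIV. partial i (\<pi> q s a) th)"
    using mult_partial_ln[OF \<pi>_diff \<pi>_nonneg] by (simp add: policy_score_def)
  also have "\<dots> = partial i (\<lambda>\<theta>. \<Sum>a\<in>UNIV. \<pi> q s a \<theta>) th"
    using \<pi>_diff by (simp add: partial_sum)
  also have "\<dots> = 0"
    by (simp add: \<pi>_sum partial_const)
  finally show ?thesis .
qed

lemma fisher_T_eq_path_expect:
  "fisher_T \<pi> P \<beta> \<pi>O s q th T i j = path_expect T (s, q) (\<lambda>xs. path_score i xs * path_score j xs)"
  unfolding fisher_T_def path_expect_def
proof (intro sum.cong refl)
  fix xs :: "('s \<times> 'q \<times> 'a) list"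
  show "path_prob \<pi> P \<beta> \<pi>O s q th xs * partial i (\<lambda>\<theta>. ln (path_prob \<pi> P \<beta> \<pi>O s q \<theta> xs)) th
      * partial j (\<lambda>\<theta>. ln (path_prob \<pi> P \<beta> \<pi>O s q \<theta> xs)) th
      = path_prob \<pi> P \<beta> \<pi>O (fst (s, q)) (snd (s, q)) th xs * (path_score i xs * path_score j xs)"
    using path_prob_nonneg[of s q th xs] partial_ln_path_prob[of s q xs]
    by (cases "path_prob \<pi> P \<beta> \<pi>O s q th xs = 0") simp_all
qed

lemma sum_step_prob: "(\<Sum>x'\<in>UNIV. step_prob s q a x') = \<pi> q s a th"
proof -
  have "(\<Sum>x'\<in>UNIV. step_prob s q a x')
      = (\<Sum>s'\<in>UNIV. \<pi> q s a th * P s a s' * (\<Sum>q'\<in>UNIV. opt_next \<beta> \<pi>O q s' q'))"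
    by (simp add: step_prob_def sum_distrib_left flip: UNIV_Times_UNIV sum.cartesian_product)
  also have "\<dots> = \<pi> q s a th"
    by (simp add: sum_opt_next P_sum flip: sum_distrib_left)
  finally show ?thesis .
qed

lemma so_kernel_eq: "so_kernel \<pi> P \<beta> \<pi>O th (s, q) x' = (\<Sum>a\<in>UNIV. step_prob s q a x')"
  by (cases x') (simp add: so_kernel_def step_prob_def)

lemma so_kernel_nonneg: "so_kernel \<pi> P \<beta> \<pi>O th x x' \<ge> 0"
  by (cases x; cases x')
    (auto simp: so_kernel_def intro!: sum_nonneg mult_nonneg_nonneg \<pi>_nonneg P_nonneg opt_next_nonneg)

lemma sum_so_kernel_eq_1: "(\<Sum>x'\<in>UNIV. so_kernel \<pi> P \<beta> \<pi>O th x x') = 1"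
proof -
  obtain s q where x: "x = (s, q)"
    by (cases x)
  have "(\<Sum>x'\<in>UNIV. so_kernel \<pi> P \<beta> \<pi>O th x x') = (\<Sum>a\<in>UNIV. \<Sum>x'\<in>UNIV. step_prob s q a x')"
    by (simp add: x so_kernel_eq) (rule sum.swap)
  then show ?thesis
    by (simp add: sum_step_prob \<pi>_sum)
qed

lemma path_score_Cons: "path_score i ((s, q, a) # r) = policy_score i q s a + path_score i r"
  by (simp add: path_score_def)

lemma path_prob_Cons:
  "path_prob \<pi> P \<beta> \<pi>O s q th ((s, q, a) # r)
     = (\<Sum>x'\<in>UNIV. step_prob s q a x' * path_prob \<pi> P \<beta> \<pi>O (fst x') (snd x') th r)"
proof (cases r)
  case Nil
  then show ?thesis
    by (simp add: path_prob_def sum_step_prob)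
next
  case (Cons y r')
  obtain s' q' a' where y: "y = (s', q', a')"
    by (cases y)
  have "(\<Sum>x'\<in>UNIV. step_prob s q a x' * path_prob \<pi> P \<beta> \<pi>O (fst x') (snd x') th r)
      = (\<Sum>x'\<in>UNIV. if x' = (s', q') then step_prob s q a (s', q') * path_prob_aux \<pi> P \<beta> \<pi>O th r else 0)"
    by (intro sum.cong refl) (auto simp: path_prob_def Cons y)
  then show ?thesis
    by (simp add: path_prob_def Cons y step_prob_def mult.assoc)
qed

lemma path_expect_0: "path_expect 0 x H = H []"
  by (simp add: path_expect_def path_prob_def)

lemma path_expect_Suc:
  "path_expect (Suc n) (s, q) H
     = (\<Sum>a\<in>UNIV. \<Sum>x'\<in>UNIV. step_prob s q a x' * path_expect n x' (\<lambda>r. H ((s, q, a) # r)))"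
proof -
  have "path_expect (Suc n) (s, q) H
      = (\<Sum>y\<in>UNIV. \<Sum>r\<in>{xs. length xs = n}. path_prob \<pi> P \<beta> \<pi>O s q th (y # r) * H (y # r))"
    by (simp add: path_expect_def sum_lists_length_Suc)
  also have "\<dots> = (\<Sum>a\<in>UNIV. \<Sum>r\<in>{xs. length xs = n}.
      path_prob \<pi> P \<beta> \<pi>O s q th ((s, q, a) # r) * H ((s, q, a) # r))"
    by (rule sum_UNIV_supported_on_fiber) (auto simp: path_prob_def)
  also have "\<dots> = (\<Sum>a\<in>UNIV. \<Sum>x'\<in>UNIV. step_prob s q a x' * path_expect n x' (\<lambda>r. H ((s, q, a) # r)))"
    by (simp add: path_prob_Cons path_expect_def sum_distrib_left sum_distrib_right mult.assoc)
      (rule sum.cong[OF refl], rule sum.swap)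
  finally show ?thesis .
qed

lemma path_expect_add: "path_expect n x (\<lambda>r. G r + H r) = path_expect n x G + path_expect n x H"
  by (simp add: path_expect_def distrib_left sum.distrib)

lemma path_expect_cmult: "path_expect n x (\<lambda>r. c * H r) = c * path_expect n x H"
  by (simp add: path_expect_def sum_distrib_left mult_ac)

lemma path_expect_one: "path_expect n x (\<lambda>_. 1) = 1"
proof (induction n arbitrary: x)
  case 0
  then show ?case
    by (simp add: path_expect_0)
next
  case (Suc n)
  obtain s q where x: "x = (s, q)"
    by (cases x)
  with Suc show ?case
    by (simp add: path_expect_Suc sum_step_prob \<pi>_sum flip: sum_distrib_right)
qed

lemma path_expect_const: "path_expect n x (\<lambda>_. c) = c"
  using path_expect_cmult[of n x c "\<lambda>_. 1"] by (simp add: path_expect_one)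

lemma path_expect_path_score: "path_expect n x (path_score i) = 0"
proof (induction n arbitrary: x)
  case 0
  then show ?case
    by (simp add: path_expect_0 path_score_def)
next
  case (Suc n)
  obtain s q where x: "x = (s, q)"
    by (cases x)
  with Suc show ?case
    by (simp add: path_expect_Suc path_score_Cons path_expect_add path_expect_const sum_step_prob
        sum_policy_mult_score_eq_0 flip: sum_distrib_right)
qed

lemma path_expect_fisher_Suc:
  fixes i j :: 'p
  defines "F \<equiv> \<lambda>r. path_score i r * path_score j r"
  shows "path_expect (Suc n) x F
    = local_fisher i j x + (\<Sum>x'\<in>UNIV. so_kernel \<pi> P \<beta> \<pi>O th x x' * path_expect n x' F)"
proof -
  obtain s q where x: "x = (s, q)"
    by (cases x)
  txt \<open>The cross terms vanish because the expected score of the remaining path is zero.\<close>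
  have "path_expect n x' (\<lambda>r. F ((s, q, a) # r))
      = policy_score i q s a * policy_score j q s a + path_expect n x' F" for a x'
  proof -
    have "(\<lambda>r. F ((s, q, a) # r)) = (\<lambda>r. policy_score i q s a * policy_score j q s a
        + (policy_score i q s a * path_score j r + (policy_score j q s a * path_score i r + F r)))"
      by (simp add: F_def path_score_Cons fun_eq_iff algebra_simps)
    then show ?thesis
      by (simp only: path_expect_add path_expect_cmult path_expect_const path_expect_path_score)
  qed
  then have "path_expect (Suc n) x F = (\<Sum>a\<in>UNIV. \<Sum>x'\<in>UNIV.
      step_prob s q a x' * policy_score i q s a * policy_score j q s a + step_prob s q a x' * path_expect n x' F)"
    by (simp add: x path_expect_Suc distrib_left mult.assoc)
  also have "\<dots> = local_fisher i j x
      + (\<Sum>a\<in>UNIV. \<Sum>x'\<in>UNIV. step_prob s q a x' * path_expect n x' F)"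
    by (simp add: x sum.distrib local_fisher_def sum_step_prob flip: sum_distrib_right)
  also have "\<dots> = local_fisher i j x + (\<Sum>x'\<in>UNIV. so_kernel \<pi> P \<beta> \<pi>O th x x' * path_expect n x' F)"
    by (simp add: x so_kernel_eq sum_distrib_right) (rule sum.swap)
  finally show ?thesis .
qed

lemma path_expect_fisher:
  "path_expect n x (\<lambda>r. path_score i r * path_score j r)
     = (\<Sum>t<n. \<Sum>z\<in>UNIV. kpow (so_kernel \<pi> P \<beta> \<pi>O th) t x z * local_fisher i j z)"
  by (rule recurrence_eq_sum_kpow) (simp add: path_expect_0 path_score_def, rule path_expect_fisher_Suc)

end

theorem theorem1:
  fixes \<pi> :: "'q::finite \<Rightarrow> 's::finite \<Rightarrow> 'a::finite \<Rightarrow> real^'p \<Rightarrow> real"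
    and P :: "'s \<Rightarrow> 'a \<Rightarrow> 's \<Rightarrow> real"
    and \<beta> :: "'q \<Rightarrow> 's \<Rightarrow> real"
    and \<pi>O :: "'s \<Rightarrow> 'q \<Rightarrow> real"
    and \<mu> :: "'s \<times> 'q \<Rightarrow> real"
    and th :: "real^'p" and s0 :: 's and q0 :: 'q
  assumes P_nonneg: "\<And>s a s'. P s a s' \<ge> 0"
    and P_sum: "\<And>s a. (\<Sum>s'\<in>UNIV. P s a s') = 1"
    and \<pi>_nonneg: "\<And>q s a th'. \<pi> q s a th' \<ge> 0"
    and \<pi>_sum: "\<And>q s th'. (\<Sum>a\<in>UNIV. \<pi> q s a th') = 1"
    and \<pi>_diff: "\<And>q s a. (\<lambda>th'. \<pi> q s a th') differentiable (at th)"
    and \<beta>_range: "\<And>q s. 0 \<le> \<beta> q s \<and> \<beta> q s \<le> 1"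
    and \<pi>O_nonneg: "\<And>s q. \<pi>O s q \<ge> 0"
    and \<pi>O_sum: "\<And>s. (\<Sum>q\<in>UNIV. \<pi>O s q) = 1"
    and irred: "irreducible_chain (so_kernel \<pi> P \<beta> \<pi>O th)"
    and aper: "aperiodic_chain (so_kernel \<pi> P \<beta> \<pi>O th)"
    and stat: "stationary_dist (so_kernel \<pi> P \<beta> \<pi>O th) \<mu>"
  shows "\<forall>i j. (\<lambda>T. fisher_T \<pi> P \<beta> \<pi>O s0 q0 th T i j / real T)
           \<longlonglongrightarrow> avg_fisher \<pi> \<mu> th i j"
proof (intro allI)
  fix i j
  interpret option_model \<pi> P \<beta> \<pi>O th
    using P_nonneg P_sum \<pi>_nonneg \<pi>_sum \<pi>_diff \<beta>_range \<pi>O_nonneg \<pi>O_sum by unfold_locales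
  let ?K = "so_kernel \<pi> P \<beta> \<pi>O th"
  have fisher: "fisher_T \<pi> P \<beta> \<pi>O s0 q0 th T i j / real T
      = (\<Sum>z\<in>UNIV. (\<Sum>t<T. kpow ?K t (s0, q0) z) / real T * local_fisher i j z)" for T
    by (simp add: fisher_T_eq_path_expect path_expect_fisher sum_divide_distrib sum_distrib_right)
      (rule sum.swap)
  have avg: "avg_fisher \<pi> \<mu> th i j = (\<Sum>z\<in>UNIV. \<mu> z * local_fisher i j z)"
    by (simp add: avg_fisher_def local_fisher_def policy_score_def case_prod_unfold)
  have "(\<lambda>T. (\<Sum>t<T. kpow ?K t (s0, q0) z) / real T) \<longlonglongrightarrow> \<mu> z" for z
    by (rule cesaro_kpow_tendsto_stationary_dist[OF so_kernel_nonneg sum_so_kernel_eq_1 irred stat])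
  then show "(\<lambda>T. fisher_T \<pi> P \<beta> \<pi>O s0 q0 th T i j / real T) \<longlonglongrightarrow> avg_fisher \<pi> \<mu> th i j"
    unfolding fisher avg by (intro tendsto_sum tendsto_mult tendsto_const)
qed

end
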